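(* There is no deterministic translation-equivariant proper $2$-coloring of the $1$-dimensional Poisson–Voronoi map. That is, if $\mathcal{P}$ is a unit intensity Poisson process on $\mathbb{R}$, there is no measurable $F:\mathbb{M}\to\mathbb{M}^2$ such that $F(\mathcal{P})$ is a.s. a partition of $\mathcal{P}$ into two parts with no two consecutive points of $\mathcal{P}$ in the same part, and such that $F(\mathcal{P}+t)=F(\mathcal{P})+t$ for all $t\in\mathbb{R}$.
   Context: $\mathbb{M}$ is the space of locally finite subsets of $\mathbb{R}$ with the local topology and Borel $\sigma$-algebra. In the $1$-dimensional Voronoi map, the cells are intervals around the points and two cells are adjacent iff their centers are consecutive points of $\mathcal{P}$. *)

theory Defs
  imports "HOL-Probability.Probability"
begin

definition locally_finite_set :: "real set \<Rightarrow> bool" where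
  "locally_finite_set A \<longleftrightarrow> (\<forall>K. bounded K \<longrightarrow> finite (A \<inter> K))"

text \<open>The measurable space \<open>\<M>\<close> of locally finite subsets of the reals, with the
  sigma-algebra generated by the counting maps \<open>A \<mapsto> #(A \<inter> B)\<close>, B bounded Borel
  (this is the Borel sigma-algebra of the local topology).\<close>
definition lf_space :: "real set measure" where
  "lf_space = sigma (Collect locally_finite_set)
     {{A \<in> Collect locally_finite_set. card (A \<inter> B) = k} | B k.
        B \<in> sets borel \<and> bounded B}"

definition translate :: "real \<Rightarrow> real set \<Rightarrow> real set" where
  "translate t A = (\<lambda>x. x + t) ` A"

text \<open>Unit intensity Poisson process on the reals, given as its law on \<open>\<M>\<close>:
  for pairwise disjoint bounded Borel sets the counts are independent and
  Poisson distributed with mean the Lebesgue measure.\<close>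
definition poisson_process :: "real set measure \<Rightarrow> bool" where
  "poisson_process P \<longleftrightarrow> prob_space P \<and> sets P = sets lf_space \<and>
     (\<forall>(n::nat) (Bs :: nat \<Rightarrow> real set) (ks :: nat \<Rightarrow> nat).
        (\<forall>i<n. Bs i \<in> sets borel \<and> bounded (Bs i)) \<and> disjoint_family_on Bs {..<n} \<longrightarrow>
        measure P {A \<in> space lf_space. \<forall>i<n. card (A \<inter> Bs i) = ks i}
          = (\<Prod>i<n. exp (- measure lborel (Bs i)) * measure lborel (Bs i) ^ ks i / fact (ks i)))"

definition consecutive :: "real set \<Rightarrow> real \<Rightarrow> real \<Rightarrow> bool" where
  "consecutive A x y \<longleftrightarrow> x \<in> A \<and> y \<in> A \<and> x < y \<and> (\<forall>z\<in>A. \<not> (x < z \<and> z < y))"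

definition proper_2colouring :: "real set \<Rightarrow> real set \<times> real set \<Rightarrow> bool" where
  "proper_2colouring A C \<longleftrightarrow> fst C \<union> snd C = A \<and> fst C \<inter> snd C = {} \<and>
     (\<forall>x y. consecutive A x y \<longrightarrow>
        \<not> (x \<in> fst C \<and> y \<in> fst C) \<and> \<not> (x \<in> snd C \<and> y \<in> snd C))"

end

theory Submission
  imports Defs "HOL-Probability.Product_PMF"
begin

text \<open>
  Suppose \<open>F\<close> were a measurable translation-equivariant proper 2-colouring, and let \<open>S\<close> be the
  event that the first point of the process in \<open>[0, \<infinity>)\<close> gets the first colour. Colours
  alternate along consecutive points, so \<open>S\<close> and its translate by \<open>t\<close> differ exactly when
  the number of points in \<open>[0, t)\<close> is odd. Approximate \<open>S\<close> within \<open>1/8\<close> by an event \<open>G\<close>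
  depending only on the points in \<open>[-M, M)\<close>; by stationarity the translate of \<open>G\<close>
  approximates the translate of \<open>S\<close> equally well. For \<open>t = 2M + 1\<close> the event
  "\<open>G\<close> and its translate differ iff the count in \<open>[0, t)\<close> is odd" therefore has probability
  at most \<open>1/4\<close>. But the count in \<open>[M, M + 1)\<close> is independent of everything \<open>G\<close> and its
  translate see, and changing its parity flips the event, so its probability is at least
  \<open>P(N = 0) = P(N = 1) = e\<^sup>-\<^sup>1 > 1/4\<close> for a Poisson variable \<open>N\<close> of mean \<open>1\<close>.
\<close>

section \<open>Approximation by a generating algebra\<close>

definition approximable :: "'a measure \<Rightarrow> 'a set set \<Rightarrow> 'a set \<Rightarrow> bool" where
  "approximable M G X \<longleftrightarrow> (\<forall>e>0. \<exists>A\<in>G. measure M (sym_diff X A) < e)"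

lemma (in finite_measure) measure_sym_diff_triangle:
  assumes "X \<in> sets M" "Y \<in> sets M" "A \<in> sets M"
  shows "measure M (sym_diff X A) \<le> measure M (sym_diff X Y) + measure M (sym_diff Y A)"
proof -
  have "measure M (sym_diff X A) \<le> measure M (sym_diff X Y \<union> sym_diff Y A)"
    by (rule finite_measure_mono) (use assms in auto)
  also have "\<dots> \<le> measure M (sym_diff X Y) + measure M (sym_diff Y A)"
    by (rule measure_Un_le) (use assms in auto)
  finally show ?thesis .
qed

lemma (in finite_measure) measure_sym_diff_Un_le:
  assumes "X \<in> sets M" "Y \<in> sets M" "A \<in> sets M" "B \<in> sets M"
  shows "measure M (sym_diff (X \<union> Y) (A \<union> B)) \<le> measure M (sym_diff X A) + measure M (sym_diff Y B)"
proof -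
  have "measure M (sym_diff (X \<union> Y) (A \<union> B)) \<le> measure M (sym_diff X A \<union> sym_diff Y B)"
    by (rule finite_measure_mono) (use assms in auto)
  also have "\<dots> \<le> measure M (sym_diff X A) + measure M (sym_diff Y B)"
    by (rule measure_Un_le) (use assms in auto)
  finally show ?thesis .
qed

lemma (in finite_measure) approximable_Un:
  assumes G: "algebra \<Omega> G" "G \<subseteq> sets M" and X: "X \<in> sets M" "approximable M G X"
    and Y: "Y \<in> sets M" "approximable M G Y"
  shows "approximable M G (X \<union> Y)"
  unfolding approximable_def
proof (intro allI impI)
  fix e :: real assume "0 < e"
  then obtain A B where A: "A \<in> G" "measure M (sym_diff X A) < e / 2"
    and B: "B \<in> G" "measure M (sym_diff Y B) < e / 2"
    using X(2) Y(2) unfolding approximable_def by (meson half_gt_zero)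
  moreover have "A \<union> B \<in> G"
    using G(1) A(1) B(1) by (simp add: algebra_iff_Un)
  moreover have "A \<in> sets M" "B \<in> sets M"
    using G(2) A(1) B(1) by auto
  ultimately show "\<exists>C\<in>G. measure M (sym_diff (X \<union> Y) C) < e"
    using measure_sym_diff_Un_le[OF X(1) Y(1)] by (intro bexI[of _ "A \<union> B"]) fastforce+
qed

lemma (in finite_measure) approximable_limit:
  assumes G: "G \<subseteq> sets M" and X: "X \<in> sets M" and T: "\<And>n. T n \<in> sets M" "\<And>n. approximable M G (T n)"
    and lim: "(\<lambda>n. measure M (sym_diff X (T n))) \<longlonglongrightarrow> 0"
  shows "approximable M G X"
  unfolding approximable_def
proof (intro allI impI)
  fix e :: real assume "0 < e"
  then have "\<forall>\<^sub>F n in sequentially. measure M (sym_diff X (T n)) < e / 2"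
    using lim by (intro order_tendstoD(2)) auto
  then obtain n where n: "measure M (sym_diff X (T n)) < e / 2"
    by (auto simp: eventually_sequentially)
  obtain A where A: "A \<in> G" "measure M (sym_diff (T n) A) < e / 2"
    using T(2)[of n] \<open>0 < e\<close> unfolding approximable_def by (meson half_gt_zero)
  then show "\<exists>A\<in>G. measure M (sym_diff X A) < e"
    using measure_sym_diff_triangle[OF X T(1)[of n], of A] G n by (intro bexI[of _ A]) auto
qed

lemma (in finite_measure) approximable_UN:
  fixes X :: "nat \<Rightarrow> 'a set"
  assumes G: "algebra \<Omega> G" "G \<subseteq> sets M" and X: "\<And>i. X i \<in> sets M" "\<And>i. approximable M G (X i)"
  shows "approximable M G (\<Union>i. X i)"
proof -
  define T where "T n = (\<Union>i<n. X i)" for n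
  have T: "T n \<in> sets M" for n
    unfolding T_def using X by auto
  have T_approx: "approximable M G (T n)" for n
  proof (induction n)
    case 0
    have "{} \<in> G"
      using G(1) by (simp add: algebra_iff_Un)
    then show ?case
      unfolding approximable_def T_def by (intro allI impI bexI[of _ "{}"]) auto
  next
    case (Suc n)
    have "T (Suc n) = T n \<union> X n"
      unfolding T_def by (simp add: lessThan_Suc Un_commute)
    then show ?case
      using approximable_Un[OF G T Suc X(1,2)] by simp
  qed
  have lim: "(\<lambda>n. measure M (sym_diff (\<Union>i. X i) (T n))) \<longlonglongrightarrow> 0"
  proof -
    have "incseq T"
      unfolding incseq_def T_def by (auto intro: less_le_trans)
    moreover have "(\<Union>n. T n) = (\<Union>i. X i)"
      unfolding T_def by blast
    ultimately have "(\<lambda>n. measure M (T n)) \<longlonglongrightarrow> measure M (\<Union>i. X i)"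
      using finite_Lim_measure_incseq[of T] T by auto
    then have "(\<lambda>n. measure M (\<Union>i. X i) - measure M (T n))
        \<longlonglongrightarrow> measure M (\<Union>i. X i) - measure M (\<Union>i. X i)"
      by (intro tendsto_diff tendsto_const)
    then have "(\<lambda>n. measure M (\<Union>i. X i) - measure M (T n)) \<longlonglongrightarrow> 0"
      by simp
    moreover have "measure M (sym_diff (\<Union>i. X i) (T n)) = measure M (\<Union>i. X i) - measure M (T n)" for n
    proof -
      have "sym_diff (\<Union>i. X i) (T n) = (\<Union>i. X i) - T n" and sub: "T n \<subseteq> (\<Union>i. X i)"
        unfolding T_def by blast+
      moreover have "(\<Union>i. X i) \<in> sets M"
        using X(1) by auto
      ultimately show ?thesis
        using finite_measure_Diff[OF _ T sub] by simp
    qed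
    ultimately show ?thesis
      by simp
  qed
  show ?thesis
    by (rule approximable_limit[OF G(2) _ T T_approx lim]) (use X(1) in auto)
qed

lemma (in finite_measure) approximable_sigma_sets:
  assumes G: "algebra \<Omega> G" and sets_M: "sets M = sigma_sets \<Omega> G" and S: "S \<in> sets M"
  shows "approximable M G S"
  using S unfolding sets_M
proof (induction rule: sigma_sets.induct)
  case (Basic X)
  then show ?case
    unfolding approximable_def by (intro allI impI bexI[of _ X]) auto
next
  case Empty
  then show ?case
    using G unfolding approximable_def algebra_iff_Un by (intro allI impI bexI[of _ "{}"]) auto
next
  case (Compl X)
  interpret G: algebra \<Omega> G by fact
  have "X \<subseteq> \<Omega>"
    using Compl.hyps sigma_sets_into_sp[OF G.space_closed] by blast
  then have sym_diff: "sym_diff (\<Omega> - X) (\<Omega> - A) = sym_diff X A" if "A \<in> G" for A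
    using G.sets_into_space[OF that] by auto
  show ?case
    unfolding approximable_def
  proof (intro allI impI)
    fix e :: real assume "0 < e"
    then obtain A where "A \<in> G" "measure M (sym_diff X A) < e"
      using Compl.IH unfolding approximable_def by blast
    then show "\<exists>A\<in>G. measure M (sym_diff (\<Omega> - X) A) < e"
      using sym_diff by (intro bexI[of _ "\<Omega> - A"]) auto
  qed
next
  case (Union X)
  have "G \<subseteq> sets M"
    unfolding sets_M by (rule sigma_sets_superset_generator)
  moreover have "X i \<in> sets M" for i
    using Union.hyps by (simp add: sets_M)
  ultimately show ?case
    using approximable_UN[OF G] Union.IH by blast
qed

section \<open>Refining a list of sets into disjoint atoms\<close>

definition count_vector :: "'a set list \<Rightarrow> 'a set \<Rightarrow> nat list" where
  "count_vector Bs A = map (\<lambda>B. card (A \<inter> B)) Bs"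

lemma count_vector_Nil [simp]: "count_vector [] A = []"
  and count_vector_Cons [simp]: "count_vector (B # Bs) A = card (A \<inter> B) # count_vector Bs A"
  and count_vector_append [simp]: "count_vector (Bs @ Cs) A = count_vector Bs A @ count_vector Cs A"
  and length_count_vector [simp]: "length (count_vector Bs A) = length Bs"
  by (simp_all add: count_vector_def)

text \<open>\<open>atoms Bs\<close> cuts \<open>\<Union>(set Bs)\<close> into pairwise disjoint pieces (some possibly empty) of which
  every set of \<open>Bs\<close> is a union; \<open>counts_of_atoms\<close> recovers the counts in the sets of \<open>Bs\<close>
  from the counts in the atoms.\<close>

fun atoms :: "'a set list \<Rightarrow> 'a set list" where
  "atoms [] = []"
| "atoms (B # Bs) = (B - \<Union>(set Bs)) # concat (map (\<lambda>D. [D \<inter> B, D - B]) (atoms Bs))"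

fun pair_sums :: "nat list \<Rightarrow> nat list" where
  "pair_sums (a # b # r) = (a + b) # pair_sums r"
| "pair_sums _ = []"

fun sum_pair_fsts :: "nat list \<Rightarrow> nat" where
  "sum_pair_fsts (a # b # r) = a + sum_pair_fsts r"
| "sum_pair_fsts _ = 0"

fun counts_of_atoms :: "nat \<Rightarrow> nat list \<Rightarrow> nat list" where
  "counts_of_atoms 0 c = []"
| "counts_of_atoms (Suc n) c = (hd c + sum_pair_fsts (tl c)) # counts_of_atoms n (pair_sums (tl c))"

lemma pair_sums_concat: "pair_sums (concat (map (\<lambda>D. [f D, g D]) L)) = map (\<lambda>D. f D + g D) L"
  by (induction L) auto

lemma sum_pair_fsts_concat: "sum_pair_fsts (concat (map (\<lambda>D. [f D, g D]) L)) = sum_list (map f L)"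
  by (induction L) auto

lemma Union_split_atoms: "\<Union>(set (concat (map (\<lambda>D. [D \<inter> B, D - B]) L))) = \<Union>(set L)"
  by (induction L) auto

lemma Union_atoms: "\<Union>(set (atoms Bs)) = \<Union>(set Bs)"
proof (induction Bs)
  case (Cons B Bs)
  then show ?case
    by (simp only: atoms.simps list.set Union_insert Union_split_atoms) auto
qed simp

lemma sorted_wrt_disjnt_split:
  "sorted_wrt disjnt L \<Longrightarrow> sorted_wrt disjnt (concat (map (\<lambda>D. [D \<inter> B, D - B]) L))"
  by (induction L) (auto simp: disjnt_def)

lemma sorted_wrt_disjnt_atoms: "sorted_wrt disjnt (atoms Bs)"
proof (induction Bs)
  case (Cons B Bs)
  have "disjnt (B - \<Union>(set Bs)) D" if "D \<in> set (concat (map (\<lambda>D. [D \<inter> B, D - B]) (atoms Bs)))" for D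
    using that Union_split_atoms[of B "atoms Bs"] Union_atoms[of Bs] by (auto simp: disjnt_def)
  then show ?case
    using sorted_wrt_disjnt_split[OF Cons.IH] by simp
qed simp

lemma atoms_subset: "D \<in> set (atoms Bs) \<Longrightarrow> \<exists>B\<in>set Bs. D \<subseteq> B"
  by (induction Bs arbitrary: D) fastforce+

lemma atoms_in_sets: "set Bs \<subseteq> sets M \<Longrightarrow> set (atoms Bs) \<subseteq> sets M"
proof (induction Bs)
  case (Cons B Bs)
  have "\<Union>(set Bs) \<in> sets M"
    using Cons.prems by (intro sets.finite_Union) auto
  with Cons show ?case by auto
qed simp

lemma atoms_map_image: "inj f \<Longrightarrow> atoms (map ((`) f) Bs) = map ((`) f) (atoms Bs)"
proof (induction Bs)
  case (Cons B Bs)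
  have "concat (map (\<lambda>D. [D \<inter> f ` B, D - f ` B]) (map ((`) f) L))
      = map ((`) f) (concat (map (\<lambda>D. [D \<inter> B, D - B]) L))" for L
    using Cons.prems by (induction L) (auto simp: image_Int image_set_diff)
  with Cons show ?case
    by (simp add: image_set_diff image_Union)
qed simp

lemma card_Int_Union_disjoint_list:
  assumes "sorted_wrt disjnt L" "finite Y"
  shows "card (Y \<inter> \<Union>(set L)) = sum_list (map (\<lambda>D. card (Y \<inter> D)) L)"
  using assms
proof (induction L)
  case (Cons D L)
  have "card (Y \<inter> \<Union>(set (D # L))) = card (Y \<inter> D) + card (Y \<inter> \<Union>(set L))"
    using Cons.prems by (subst card_Un_disjoint[symmetric]) (auto simp: disjnt_def Int_Un_distrib)
  with Cons show ?case by simp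
qed simp

lemma tl_count_vector_atoms_Cons:
  "tl (count_vector (atoms (B # Bs)) A)
    = concat (map (\<lambda>D. [card (A \<inter> (D \<inter> B)), card (A \<inter> (D - B))]) (atoms Bs))"
  by (simp add: count_vector_def map_concat o_def)

lemma pair_sums_count_vector_atoms:
  assumes "finite (A \<inter> \<Union>(set Bs))"
  shows "pair_sums (tl (count_vector (atoms (B # Bs)) A)) = count_vector (atoms Bs) A"
proof -
  have "card (A \<inter> (D \<inter> B)) + card (A \<inter> (D - B)) = card (A \<inter> D)" if "D \<in> set (atoms Bs)" for D
  proof -
    have "A \<inter> D \<subseteq> A \<inter> \<Union>(set Bs)"
      using that Union_atoms[of Bs] by blast
    then have "finite (A \<inter> D)"
      using assms by (rule finite_subset)
    then show ?thesis
      using card_Int_Diff[of "A \<inter> D" B] by (simp add: Int_assoc Int_Diff)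
  qed
  then show ?thesis
    unfolding tl_count_vector_atoms_Cons pair_sums_concat by (simp add: count_vector_def)
qed

lemma sum_pair_fsts_count_vector_atoms:
  assumes "finite (A \<inter> B)"
  shows "sum_pair_fsts (tl (count_vector (atoms (B # Bs)) A)) = card (A \<inter> B \<inter> \<Union>(set Bs))"
proof -
  have "A \<inter> (D \<inter> B) = A \<inter> B \<inter> D" for D
    by blast
  then have "sum_pair_fsts (tl (count_vector (atoms (B # Bs)) A))
      = sum_list (map (\<lambda>D. card (A \<inter> B \<inter> D)) (atoms Bs))"
    unfolding tl_count_vector_atoms_Cons sum_pair_fsts_concat by simp
  also have "\<dots> = card (A \<inter> B \<inter> \<Union>(set Bs))"
    using card_Int_Union_disjoint_list[OF sorted_wrt_disjnt_atoms assms] by (simp add: Union_atoms)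
  finally show ?thesis .
qed

lemma count_vector_atoms:
  assumes "finite (A \<inter> \<Union>(set Bs))"
  shows "count_vector Bs A = counts_of_atoms (length Bs) (count_vector (atoms Bs) A)"
  using assms
proof (induction Bs)
  case (Cons B Bs)
  have fin: "finite (A \<inter> B)" "finite (A \<inter> \<Union>(set Bs))"
    using Cons.prems by (simp_all add: Int_Un_distrib)
  have "card (A \<inter> (B - \<Union>(set Bs))) + card (A \<inter> B \<inter> \<Union>(set Bs)) = card (A \<inter> B)"
    using card_Int_Diff[OF fin(1), of "\<Union>(set Bs)"] by (simp add: Int_Diff)
  then show ?case
    using Cons.IH fin pair_sums_count_vector_atoms[OF fin(2)] sum_pair_fsts_count_vector_atoms[OF fin(1)]
    by simp
qed simp

section \<open>Independent Poisson counts\<close>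

text \<open>\<open>poisson_pmf\<close> requires a positive mean; a set of measure zero carries no points.\<close>

definition poisson_count_pmf :: "real \<Rightarrow> nat pmf" where
  "poisson_count_pmf r = (if 0 < r then poisson_pmf r else return_pmf 0)"

lemma pmf_poisson_count_pmf: "0 \<le> r \<Longrightarrow> pmf (poisson_count_pmf r) k = exp (- r) * r ^ k / fact k"
  by (cases "r = 0") (auto simp: poisson_count_pmf_def indicator_def)

fun poisson_counts_pmf :: "real list \<Rightarrow> nat list pmf" where
  "poisson_counts_pmf [] = return_pmf []"
| "poisson_counts_pmf (r # rs) =
     map_pmf (\<lambda>(x, xs). x # xs) (pair_pmf (poisson_count_pmf r) (poisson_counts_pmf rs))"

lemma pmf_poisson_counts_pmf_Cons:
  "pmf (poisson_counts_pmf (r # rs)) (x # xs) = pmf (poisson_count_pmf r) x * pmf (poisson_counts_pmf rs) xs"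
proof -
  have "inj (\<lambda>(x :: nat, xs). x # xs)"
    by (auto simp: inj_def)
  then show ?thesis
    using pmf_map_inj'[of "\<lambda>(x, xs). x # xs" _ "(x, xs)"] by (simp add: pmf_pair)
qed

lemma pmf_poisson_counts_pmf:
  assumes "\<forall>r\<in>set rs. 0 \<le> r"
  shows "pmf (poisson_counts_pmf rs) v = (if length v = length rs then
      (\<Prod>i<length rs. exp (- (rs ! i)) * (rs ! i) ^ (v ! i) / fact (v ! i)) else 0)"
  using assms
proof (induction rs arbitrary: v)
  case Nil
  then show ?case by (cases v) (auto simp: indicator_def)
next
  case (Cons r rs)
  show ?case
  proof (cases v)
    case Nil
    have "[] \<notin> set_pmf (poisson_counts_pmf (r # rs))"
      by auto
    then show ?thesis
      using Nil by (simp add: pmf_eq_0_set_pmf)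
  next
    case (Cons x xs)
    then have "pmf (poisson_counts_pmf (r # rs)) v = pmf (poisson_count_pmf r) x * pmf (poisson_counts_pmf rs) xs"
      by (simp only: pmf_poisson_counts_pmf_Cons)
    moreover have "(\<Prod>i<length (r # rs). exp (- ((r # rs) ! i)) * ((r # rs) ! i) ^ (v ! i) / fact (v ! i))
      = exp (- r) * r ^ x / fact x * (\<Prod>i<length rs. exp (- (rs ! i)) * (rs ! i) ^ (xs ! i) / fact (xs ! i))"
      unfolding Cons length_Cons by (subst prod.lessThan_Suc_shift) simp
    ultimately show ?thesis
      using Cons Cons.IH[of xs] Cons.prems by (simp add: pmf_poisson_count_pmf)
  qed
qed

lemma measure_poisson_counts_pmf_ge:
  assumes "\<And>xs. 0 # xs \<in> K \<or> 1 # xs \<in> K"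
  shows "exp (-1) \<le> measure (poisson_counts_pmf (1 # rs)) K"
proof -
  define U where "U = {xs. 0 # xs \<in> K}"
  define p where "p = pair_pmf (poisson_count_pmf 1) (poisson_counts_pmf rs)"
  have U: "{0} \<times> U \<union> {1} \<times> - U \<subseteq> (\<lambda>(x, xs). x # xs) -` K"
    using assms unfolding U_def by (auto, metis One_nat_def)
  have "exp (-1) = exp (-1) * measure (poisson_counts_pmf rs) U + exp (-1) * measure (poisson_counts_pmf rs) (- U)"
    using measure_pmf.prob_compl[of U "poisson_counts_pmf rs"]
    by (simp add: Compl_eq_Diff_UNIV flip: distrib_left)
  also have "\<dots> = measure p ({0} \<times> U) + measure p ({1} \<times> - U)"
    unfolding p_def by (simp add: measure_pmf_prob_product measure_pmf_single pmf_poisson_count_pmf)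
  also have "\<dots> = measure p ({0} \<times> U \<union> {1} \<times> - U)"
    by (rule measure_Union[symmetric]) auto
  also have "\<dots> \<le> measure p ((\<lambda>(x, xs). x # xs) -` K)"
    by (rule measure_pmf.finite_measure_mono[OF U]) simp
  also have "\<dots> = measure (poisson_counts_pmf (1 # rs)) K"
    by (simp add: p_def)
  finally show ?thesis .
qed

section \<open>Counting events and cylinder events\<close>

abbreviation lf_sets :: "real set set" where
  "lf_sets \<equiv> Collect locally_finite_set"

definition counting_sets :: "real set set set" where
  "counting_sets = {{A \<in> lf_sets. card (A \<inter> B) = k} | B k. B \<in> sets borel \<and> bounded B}"

lemma counting_sets_subset: "counting_sets \<subseteq> Pow lf_sets"
  unfolding counting_sets_def by auto

lemma lf_space_eq_sigma: "lf_space = sigma lf_sets counting_sets"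
  unfolding lf_space_def counting_sets_def by simp

lemma space_lf_space [simp]: "space lf_space = lf_sets"
  unfolding lf_space_eq_sigma using counting_sets_subset by (simp add: space_measure_of_conv)

lemma sets_lf_space: "sets lf_space = sigma_sets lf_sets counting_sets"
  unfolding lf_space_eq_sigma using counting_sets_subset by simp

lemma lf_sets_in_sets [simp]: "lf_sets \<in> sets lf_space"
  by (metis sets.top space_lf_space)

lemma locally_finite_setD: "locally_finite_set A \<Longrightarrow> bounded B \<Longrightarrow> finite (A \<inter> B)"
  unfolding locally_finite_set_def by auto

lemma card_Int_eq_in_sets:
  "B \<in> sets borel \<Longrightarrow> bounded B \<Longrightarrow> {A \<in> lf_sets. card (A \<inter> B) = k} \<in> sets lf_space"
  unfolding sets_lf_space counting_sets_def by (rule sigma_sets.Basic) auto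

lemma measurable_card_Int:
  assumes "B \<in> sets borel" "bounded B"
  shows "(\<lambda>A. card (A \<inter> B)) \<in> lf_space \<rightarrow>\<^sub>M count_space UNIV"
proof (subst measurable_count_space_eq_countable, safe)
  fix k :: nat
  have "(\<lambda>A. card (A \<inter> B)) -` {k} \<inter> space lf_space = {A \<in> lf_sets. card (A \<inter> B) = k}"
    by auto
  then show "(\<lambda>A. card (A \<inter> B)) -` {k} \<inter> space lf_space \<in> sets lf_space"
    using card_Int_eq_in_sets[OF assms] by simp
qed auto

definition bounded_borel_list :: "real set list \<Rightarrow> bool" where
  "bounded_borel_list Bs \<longleftrightarrow> (\<forall>B\<in>set Bs. B \<in> sets borel \<and> bounded B)"

lemma bounded_borel_list_simps [simp]:
  "bounded_borel_list []"
  "bounded_borel_list (B # Bs) \<longleftrightarrow> B \<in> sets borel \<and> bounded B \<and> bounded_borel_list Bs"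
  "bounded_borel_list (Bs @ Cs) \<longleftrightarrow> bounded_borel_list Bs \<and> bounded_borel_list Cs"
  by (auto simp: bounded_borel_list_def)

lemma count_vector_eq_in_sets:
  "bounded_borel_list Bs \<Longrightarrow> {A \<in> lf_sets. count_vector Bs A = v} \<in> sets lf_space"
proof (induction Bs arbitrary: v)
  case Nil
  then show ?case by (cases v) auto
next
  case (Cons B Bs)
  show ?case
  proof (cases v)
    case (Cons k w)
    have "{A \<in> lf_sets. count_vector (B # Bs) A = v}
        = {A \<in> lf_sets. card (A \<inter> B) = k} \<inter> {A \<in> lf_sets. count_vector Bs A = w}"
      using Cons by auto
    then show ?thesis
      using Cons.prems Cons.IH card_Int_eq_in_sets[of B k] by auto
  qed simp
qed

lemma measurable_count_vector:
  assumes "bounded_borel_list Bs"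
  shows "count_vector Bs \<in> lf_space \<rightarrow>\<^sub>M count_space UNIV"
proof (subst measurable_count_space_eq_countable, safe)
  fix v
  have "count_vector Bs -` {v} \<inter> space lf_space = {A \<in> lf_sets. count_vector Bs A = v}"
    by auto
  then show "count_vector Bs -` {v} \<inter> space lf_space \<in> sets lf_space"
    using count_vector_eq_in_sets[OF assms] by simp
qed auto

definition cylinders :: "real set set set" where
  "cylinders = {{A \<in> lf_sets. count_vector Bs A \<in> K} | Bs K. bounded_borel_list Bs}"

lemma cylinderI: "bounded_borel_list Bs \<Longrightarrow> {A \<in> lf_sets. count_vector Bs A \<in> K} \<in> cylinders"
  unfolding cylinders_def by blast

lemma cylinder_in_sets:
  assumes "bounded_borel_list Bs"
  shows "{A \<in> lf_sets. count_vector Bs A \<in> K} \<in> sets lf_space"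
  using measurable_sets[OF measurable_count_vector[OF assms], of K]
  by (simp add: vimage_def Int_def conj_commute)

lemma cylinders_subset_sets: "cylinders \<subseteq> sets lf_space"
  unfolding cylinders_def using cylinder_in_sets by auto

lemma algebra_cylinders: "algebra lf_sets cylinders"
  unfolding algebra_iff_Int
proof (intro conjI ballI)
  show "cylinders \<subseteq> Pow lf_sets"
    unfolding cylinders_def by auto
  show "{} \<in> cylinders"
    using cylinderI[of "[]" "{}"] by simp
next
  fix X assume "X \<in> cylinders"
  then obtain Bs K where "X = {A \<in> lf_sets. count_vector Bs A \<in> K}" "bounded_borel_list Bs"
    unfolding cylinders_def by blast
  moreover have "lf_sets - X = {A \<in> lf_sets. count_vector Bs A \<in> - K}"
    using calculation by auto
  ultimately show "lf_sets - X \<in> cylinders"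
    using cylinderI[of Bs "- K"] by simp
next
  fix X Y assume "X \<in> cylinders" "Y \<in> cylinders"
  then obtain Bs K Cs L where
    X: "X = {A \<in> lf_sets. count_vector Bs A \<in> K}" "bounded_borel_list Bs" and
    Y: "Y = {A \<in> lf_sets. count_vector Cs A \<in> L}" "bounded_borel_list Cs"
    unfolding cylinders_def by blast
  have "X \<inter> Y = {A \<in> lf_sets. count_vector (Bs @ Cs) A
      \<in> {v. take (length Bs) v \<in> K \<and> drop (length Bs) v \<in> L}}"
    unfolding X Y by auto
  also have "\<dots> \<in> cylinders"
    by (rule cylinderI) (simp add: X Y)
  finally show "X \<inter> Y \<in> cylinders" .
qed

lemma sets_lf_space_cylinders: "sets lf_space = sigma_sets lf_sets cylinders"
proof
  have "counting_sets \<subseteq> cylinders"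
  proof
    fix X assume "X \<in> counting_sets"
    then obtain B k where "X = {A \<in> lf_sets. card (A \<inter> B) = k}" "B \<in> sets borel" "bounded B"
      unfolding counting_sets_def by auto
    then show "X \<in> cylinders"
      using cylinderI[of "[B]" "{[k]}"] by simp
  qed
  then show "sets lf_space \<subseteq> sigma_sets lf_sets cylinders"
    unfolding sets_lf_space by (rule sigma_sets_mono')
  show "sigma_sets lf_sets cylinders \<subseteq> sets lf_space"
    using cylinders_subset_sets by (metis sets.sigma_sets_subset space_lf_space)
qed

lemma cylinder_bounded_support:
  assumes "G \<in> cylinders"
  obtains Bs K and M :: nat where "G = {A \<in> lf_sets. count_vector Bs A \<in> K}" "bounded_borel_list Bs"
    "\<And>B. B \<in> set Bs \<Longrightarrow> B \<subseteq> {- real M..<real M}"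
proof -
  obtain Bs K where G: "G = {A \<in> lf_sets. count_vector Bs A \<in> K}" "bounded_borel_list Bs"
    using assms unfolding cylinders_def by blast
  have "bounded (\<Union>(set Bs))"
    using G(2) by (auto simp: bounded_borel_list_def)
  then obtain r where r: "\<And>x. x \<in> \<Union>(set Bs) \<Longrightarrow> \<bar>x\<bar> \<le> r"
    unfolding bounded_real by blast
  define M where "M = nat \<lceil>r\<rceil> + 1"
  have "r < real M"
    using real_nat_ceiling_ge[of r] unfolding M_def by linarith
  then have "B \<subseteq> {- real M..<real M}" if "B \<in> set Bs" for B
    using r that by (fastforce simp: abs_le_iff)
  with G show ?thesis
    by (rule that)
qed

lemma bounded_borel_list_atoms:
  assumes "bounded_borel_list Bs"
  shows "bounded_borel_list (atoms Bs)"
  unfolding bounded_borel_list_def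
proof
  fix D assume D: "D \<in> set (atoms Bs)"
  then obtain B where "B \<in> set Bs" "D \<subseteq> B"
    using atoms_subset by blast
  moreover have "set (atoms Bs) \<subseteq> sets borel"
    using assms atoms_in_sets[of Bs borel] by (auto simp: bounded_borel_list_def)
  ultimately show "D \<in> sets borel \<and> bounded D"
    using assms D by (auto simp: bounded_borel_list_def intro: bounded_subset)
qed

lemma locally_finite_set_Int_bounded_borel_list:
  "locally_finite_set A \<Longrightarrow> bounded_borel_list Bs \<Longrightarrow> finite (A \<inter> \<Union>(set Bs))"
  by (auto simp: bounded_borel_list_def intro!: locally_finite_setD bounded_Union)

lemma translate_eq_image: "translate t = (`) (\<lambda>x. x + t)"
  by (rule ext) (simp add: translate_def)

lemma translate_Int: "translate t A \<inter> B = translate t (A \<inter> translate (- t) B)"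
  unfolding translate_def by force

lemma card_translate: "card (translate t A) = card A"
  unfolding translate_def by (rule card_image) (auto simp: inj_on_def)

lemma card_translate_Int: "card (translate t A \<inter> B) = card (A \<inter> translate (- t) B)"
  by (simp add: translate_Int card_translate)

lemma translate_Ico: "translate t {a..<b} = {a + t..<b + t}"
  unfolding translate_def by simp

lemma bounded_translate: "bounded B \<Longrightarrow> bounded (translate t B)"
  unfolding translate_def using bounded_translation[of B t] by (simp add: add.commute)

lemma locally_finite_set_translate:
  assumes "locally_finite_set A"
  shows "locally_finite_set (translate t A)"
  unfolding locally_finite_set_def
proof (intro allI impI)
  fix K :: "real set" assume "bounded K"
  then have "finite (A \<inter> translate (- t) K)"
    using assms bounded_translate by (simp add: locally_finite_set_def)
  then show "finite (translate t A \<inter> K)"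
    unfolding translate_Int by (simp add: translate_def)
qed

lemma translate_in_borel:
  assumes "B \<in> sets borel"
  shows "translate t B \<in> sets borel"
proof -
  have "translate t B = (\<lambda>x. x - t) -` B \<inter> space borel"
    unfolding translate_def by force
  also have "\<dots> \<in> sets borel"
    by (rule measurable_sets[OF _ assms]) simp
  finally show ?thesis .
qed

lemma measure_lborel_translate:
  assumes "B \<in> sets borel"
  shows "measure lborel (translate t B) = measure lborel B"
proof -
  have "translate t B = (+) t ` B"
    unfolding translate_def by (simp add: add.commute)
  then have "measure lebesgue (translate t B) = measure lebesgue B"
    using measure_translation[of t B] by simp
  then show ?thesis
    using assms translate_in_borel[OF assms] by simp
qed

lemma bounded_borel_list_translate:
  "bounded_borel_list Bs \<Longrightarrow> bounded_borel_list (map (translate t) Bs)"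
  unfolding bounded_borel_list_def by (auto intro: translate_in_borel bounded_translate)

lemma count_vector_translate: "count_vector Bs (translate t A) = count_vector (map (translate (- t)) Bs) A"
  by (simp add: count_vector_def card_translate_Int)

lemma measurable_translate: "translate t \<in> lf_space \<rightarrow>\<^sub>M lf_space"
proof -
  have "translate t \<in> lf_space \<rightarrow>\<^sub>M sigma lf_sets counting_sets"
  proof (rule measurable_measure_of[OF counting_sets_subset])
    show "translate t \<in> space lf_space \<rightarrow> lf_sets"
      using locally_finite_set_translate by auto
    fix Y assume "Y \<in> counting_sets"
    then obtain B k where B: "Y = {A \<in> lf_sets. card (A \<inter> B) = k}" "B \<in> sets borel" "bounded B"
      unfolding counting_sets_def by auto
    then have "translate t -` Y \<inter> space lf_space = {A \<in> lf_sets. card (A \<inter> translate (- t) B) = k}"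
      using locally_finite_set_translate by (auto simp: card_translate_Int)
    then show "translate t -` Y \<inter> space lf_space \<in> sets lf_space"
      using card_Int_eq_in_sets[OF translate_in_borel bounded_translate] B by simp
  qed
  then show ?thesis
    by (simp add: lf_space_eq_sigma[symmetric])
qed

locale unit_poisson_process =
  fixes P :: "real set measure"
  assumes poisson_process: "poisson_process P"
begin

sublocale prob_space P
  using poisson_process unfolding poisson_process_def by (elim conjE)

lemma sets_P: "sets P = sets lf_space"
  using poisson_process unfolding poisson_process_def by (elim conjE)

lemma space_P: "space P = lf_sets"
  using sets_eq_imp_space_eq[OF sets_P] by simp

lemma measure_counts:
  fixes n :: nat
  assumes "\<forall>i<n. Bs i \<in> sets borel \<and> bounded (Bs i)" "disjoint_family_on Bs {..<n}"
  shows "measure P {A \<in> lf_sets. \<forall>i<n. card (A \<inter> Bs i) = ks i}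
      = (\<Prod>i<n. exp (- measure lborel (Bs i)) * measure lborel (Bs i) ^ ks i / fact (ks i))"
proof -
  have "\<forall>(n::nat) Bs ks. (\<forall>i<n. Bs i \<in> sets borel \<and> bounded (Bs i)) \<and> disjoint_family_on Bs {..<n} \<longrightarrow>
      measure P {A \<in> lf_sets. \<forall>i<n. card (A \<inter> Bs i) = ks i}
      = (\<Prod>i<n. exp (- measure lborel (Bs i)) * measure lborel (Bs i) ^ ks i / fact (ks i))"
    using poisson_process unfolding poisson_process_def space_lf_space by (elim conjE)
  from this[rule_format, OF conjI[OF assms]] show ?thesis .
qed

lemma measurable_count_vector_P:
  "bounded_borel_list Bs \<Longrightarrow> count_vector Bs \<in> P \<rightarrow>\<^sub>M count_space UNIV"
  using measurable_count_vector measurable_cong_sets[OF sets_P refl] by blast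

lemma measure_count_vector_eq:
  assumes "sorted_wrt disjnt Ds" "bounded_borel_list Ds" "length v = length Ds"
  shows "measure P {A \<in> lf_sets. count_vector Ds A = v}
      = (\<Prod>i<length Ds. exp (- measure lborel (Ds ! i)) * measure lborel (Ds ! i) ^ (v ! i) / fact (v ! i))"
proof -
  have "{A \<in> lf_sets. count_vector Ds A = v} = {A \<in> lf_sets. \<forall>i<length Ds. card (A \<inter> Ds ! i) = v ! i}"
    using assms(3) by (auto simp: count_vector_def list_eq_iff_nth_eq)
  moreover have "disjoint_family_on (\<lambda>i. Ds ! i) {..<length Ds}"
    unfolding disjoint_family_on_def
    by (metis assms(1) disjnt_def disjnt_sym lessThan_iff linorder_neqE_nat sorted_wrt_nth_less)
  ultimately show ?thesis
    using measure_counts[of "length Ds" "\<lambda>i. Ds ! i" "\<lambda>i. v ! i"] assms(2)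
    by (simp add: bounded_borel_list_def)
qed

lemma distr_count_vector:
  assumes "sorted_wrt disjnt Ds" "bounded_borel_list Ds"
  shows "distr P (count_space UNIV) (count_vector Ds)
       = measure_pmf (poisson_counts_pmf (map (measure lborel) Ds))"
proof (rule measure_eqI_countable[where A = UNIV])
  fix v :: "nat list"
  have "emeasure (distr P (count_space UNIV) (count_vector Ds)) {v}
      = emeasure P {A \<in> lf_sets. count_vector Ds A = v}"
    by (subst emeasure_distr[OF measurable_count_vector_P[OF assms(2)]])
      (auto simp: space_P vimage_def Int_def conj_commute)
  also have "\<dots> = emeasure (poisson_counts_pmf (map (measure lborel) Ds)) {v}"
  proof (cases "length v = length Ds")
    case False
    then have "{A \<in> lf_sets. count_vector Ds A = v} = {}"
      by auto
    then show ?thesis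
      using False by (simp only:) (simp add: emeasure_pmf_single pmf_poisson_counts_pmf)
  next
    case True
    then show ?thesis
      using measure_count_vector_eq[OF assms True]
      by (simp add: emeasure_eq_measure emeasure_pmf_single pmf_poisson_counts_pmf)
  qed
  finally show "emeasure (distr P (count_space UNIV) (count_vector Ds)) {v}
      = emeasure (poisson_counts_pmf (map (measure lborel) Ds)) {v}" .
qed (auto simp: sets_measure_pmf)

lemma emeasure_cylinder:
  assumes "bounded_borel_list Bs"
  shows "emeasure P {A \<in> lf_sets. count_vector Bs A \<in> K}
      = emeasure (poisson_counts_pmf (map (measure lborel) (atoms Bs))) (counts_of_atoms (length Bs) -` K)"
proof -
  have atoms: "bounded_borel_list (atoms Bs)"
    using bounded_borel_list_atoms[OF assms] .
  have "{A \<in> lf_sets. count_vector Bs A \<in> K}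
      = count_vector (atoms Bs) -` (counts_of_atoms (length Bs) -` K) \<inter> space P"
    using locally_finite_set_Int_bounded_borel_list[OF _ assms]
    by (auto simp: space_P count_vector_atoms)
  also have "emeasure P \<dots> = emeasure (distr P (count_space UNIV) (count_vector (atoms Bs)))
      (counts_of_atoms (length Bs) -` K)"
    by (rule emeasure_distr[symmetric, OF measurable_count_vector_P[OF atoms]]) simp
  finally show ?thesis
    by (simp add: distr_count_vector[OF sorted_wrt_disjnt_atoms atoms])
qed

lemma distr_translate: "distr P lf_space (translate s) = P"
proof (rule measure_eqI_generator_eq[OF algebra.Int_stable[OF algebra_cylinders],
      where \<Omega> = lf_sets and A = "\<lambda>_. lf_sets"])
  have measurable: "translate s \<in> P \<rightarrow>\<^sub>M lf_space"
    using measurable_translate measurable_cong_sets[OF sets_P refl] by blast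
  show "cylinders \<subseteq> Pow lf_sets"
    unfolding cylinders_def by auto
  show "sets (distr P lf_space (translate s)) = sigma_sets lf_sets cylinders"
    "sets P = sigma_sets lf_sets cylinders"
    by (simp_all add: sets_P sets_lf_space_cylinders)
  show "range (\<lambda>_. lf_sets) \<subseteq> cylinders" "(\<Union>i. lf_sets) = lf_sets"
    using cylinderI[of "[]" UNIV] by auto
  show "emeasure (distr P lf_space (translate s)) lf_sets \<noteq> \<infinity>" for i :: nat
    using prob_space.emeasure_space_1[OF prob_space_distr[OF measurable]] by simp
  fix X assume "X \<in> cylinders"
  then obtain Bs K where X: "X = {A \<in> lf_sets. count_vector Bs A \<in> K}" "bounded_borel_list Bs"
    unfolding cylinders_def by auto
  have "emeasure (distr P lf_space (translate s)) X = emeasure P (translate s -` X \<inter> space P)"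
    by (rule emeasure_distr[OF measurable]) (use X cylinder_in_sets in auto)
  also have "translate s -` X \<inter> space P = {A \<in> lf_sets. count_vector (map (translate (- s)) Bs) A \<in> K}"
    using X locally_finite_set_translate by (auto simp: space_P count_vector_translate)
  also have "emeasure P \<dots> = emeasure P X"
  proof -
    have "atoms (map (translate (- s)) Bs) = map (translate (- s)) (atoms Bs)"
      unfolding translate_eq_image by (rule atoms_map_image) (simp add: inj_def)
    moreover have "measure lborel (translate (- s) D) = measure lborel D" if "D \<in> set (atoms Bs)" for D
      using bounded_borel_list_atoms[OF X(2)] that
      by (intro measure_lborel_translate) (auto simp: bounded_borel_list_def)
    ultimately show ?thesis
      unfolding X(1) emeasure_cylinder[OF X(2)] emeasure_cylinder[OF bounded_borel_list_translate[OF X(2)]]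
      by (simp cong: map_cong)
  qed
  finally show "emeasure (distr P lf_space (translate s)) X = emeasure P X" .
qed

lemma measure_translate_vimage:
  assumes "X \<in> sets lf_space"
  shows "measure P (translate s -` X \<inter> lf_sets) = measure P X"
proof -
  have "translate s \<in> P \<rightarrow>\<^sub>M lf_space"
    using measurable_translate measurable_cong_sets[OF sets_P refl] by blast
  from measure_distr[OF this assms] show ?thesis
    by (simp add: distr_translate space_P)
qed

lemma cylinder_approximation:
  assumes "S \<in> sets lf_space" "0 < e"
  obtains Bs K and M :: nat where "bounded_borel_list Bs" "\<And>B. B \<in> set Bs \<Longrightarrow> B \<subseteq> {- real M..<real M}"
    "measure P (sym_diff S {A \<in> lf_sets. count_vector Bs A \<in> K}) < e"
proof -
  have "approximable P cylinders S"
    using approximable_sigma_sets[OF algebra_cylinders] assms(1) by (simp add: sets_P sets_lf_space_cylinders)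
  then obtain G where G: "G \<in> cylinders" "measure P (sym_diff S G) < e"
    using assms(2) unfolding approximable_def by blast
  obtain Bs K M where "G = {A \<in> lf_sets. count_vector Bs A \<in> K}" "bounded_borel_list Bs"
    "\<And>B. B \<in> set Bs \<Longrightarrow> B \<subseteq> {- real M..<real M}"
    using cylinder_bounded_support[OF G(1)] by blast
  with G(2) show ?thesis
    by (intro that) auto
qed

lemma AE_point_from: "AE A in P. \<exists>y\<in>A. t \<le> y"
proof -
  define N where "N k = {A \<in> lf_sets. card (A \<inter> {t..<t + real k}) = 0}" for k :: nat
  have N: "N k \<in> sets P" for k
    unfolding N_def sets_P by (rule card_Int_eq_in_sets) auto
  have "measure P (N k) = exp (- real k)" for k
    using measure_counts[of 1 "\<lambda>_. {t..<t + real k}" "\<lambda>_. 0"]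
    by (simp add: N_def disjoint_family_on_def)
  then have bound: "measure P (\<Inter>k. N k) \<le> exp (- real k)" for k
    using finite_measure_mono[of "\<Inter>k. N k" "N k"] N by auto
  have "measure P (\<Inter>k. N k) = 0"
  proof (rule ccontr)
    assume "measure P (\<Inter>k. N k) \<noteq> 0"
    then have pos: "0 < measure P (\<Inter>k. N k)"
      using measure_nonneg[of P] by (simp add: order_less_le)
    obtain k :: nat where "- ln (measure P (\<Inter>k. N k)) < real k"
      using reals_Archimedean2 by blast
    then have "exp (- real k) < exp (ln (measure P (\<Inter>k. N k)))"
      by simp
    with pos bound[of k] show False
      by simp
  qed
  moreover have "{A \<in> space P. \<not> (\<exists>y\<in>A. t \<le> y)} \<subseteq> (\<Inter>k. N k)"
    by (auto simp: N_def space_P card_eq_0_iff)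
  ultimately show ?thesis
    using N by (intro AE_I'[of "\<Inter>k. N k"]) (auto simp: emeasure_eq_measure)
qed

end

section \<open>Proper 2-colourings and first points\<close>

lemma card_Int_Ico_split:
  assumes "locally_finite_set A" "a \<le> b" "b \<le> c"
  shows "card (A \<inter> {a..<c}) = card (A \<inter> {a..<b}) + card (A \<inter> {b..<c})"
proof -
  have "A \<inter> {a..<c} = (A \<inter> {a..<b}) \<union> (A \<inter> {b..<c})"
    using assms(2,3) by auto
  moreover have "finite (A \<inter> {a..<b})" "finite (A \<inter> {b..<c})"
    using assms(1) by (simp_all add: locally_finite_setD)
  ultimately show ?thesis
    by (simp add: card_Un_disjoint disjoint_iff)
qed

lemma next_point:
  assumes "locally_finite_set A" "a \<in> A" "b \<in> A" "a < b"
  obtains c where "consecutive A a c" "c \<le> b"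
proof
  let ?S = "A \<inter> {a<..b}"
  have S: "finite ?S" "b \<in> ?S"
    using assms by (simp_all add: locally_finite_setD)
  have min: "Min ?S \<in> ?S"
    using Min_in[OF S(1)] S(2) by blast
  have "z \<notin> A" if "a < z" "z < Min ?S" for z
    using Min_le[OF S(1), of z] that min by auto
  then show "consecutive A a (Min ?S)"
    using assms(2) min unfolding consecutive_def by auto
  show "Min ?S \<le> b"
    using S by simp
qed

lemma proper_2colouring_parity:
  assumes C: "proper_2colouring A C" and A: "locally_finite_set A"
    and "a \<in> A" "b \<in> A" "a \<le> b"
  shows "(a \<in> fst C \<longleftrightarrow> b \<in> fst C) \<longleftrightarrow> even (card (A \<inter> {a..<b}))"
  using assms(3-5)
proof (induction "card (A \<inter> {a..<b})" arbitrary: a rule: less_induct)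
  case less
  show ?case
  proof (cases "a = b")
    case False
    then obtain c where c: "consecutive A a c" "c \<le> b"
      using next_point[OF A less.prems(1,2)] less.prems(3) by auto
    have "A \<inter> {a..<c} = {a}" "a \<le> c"
      using c(1) unfolding consecutive_def by (auto simp: not_less)
    then have card: "card (A \<inter> {a..<b}) = Suc (card (A \<inter> {c..<b}))"
      using card_Int_Ico_split[OF A \<open>a \<le> c\<close> c(2)] by simp
    have "a \<in> fst C \<longleftrightarrow> c \<notin> fst C"
      using C c(1) unfolding proper_2colouring_def consecutive_def by blast
    moreover have "(c \<in> fst C \<longleftrightarrow> b \<in> fst C) \<longleftrightarrow> even (card (A \<inter> {c..<b}))"
      using less.hyps[of c] card c less.prems(2) by (simp add: consecutive_def)
    ultimately show ?thesis
      using card by auto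
  qed simp
qed

lemma first_point_from:
  assumes "locally_finite_set A" "y \<in> A" "s \<le> y"
  obtains x where "x \<in> A" "s \<le> x" "A \<inter> {s..<x} = {}"
proof
  let ?S = "A \<inter> {s..y}"
  have S: "finite ?S" "y \<in> ?S"
    using assms by (simp_all add: locally_finite_setD)
  have min: "Min ?S \<in> ?S"
    using Min_in[OF S(1)] S(2) by blast
  then show "Min ?S \<in> A" "s \<le> Min ?S"
    by auto
  have "z \<notin> A" if "s \<le> z" "z < Min ?S" for z
    using Min_le[OF S(1), of z] that min by auto
  then show "A \<inter> {s..<Min ?S} = {}"
    by auto
qed

lemma locally_finite_gap_right:
  assumes "locally_finite_set A"
  obtains r where "x < r" "A \<inter> {x<..<r} = {}"
proof
  let ?S = "insert (x + 1) (A \<inter> {x<..x + 1})"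
  have S: "finite ?S"
    using assms by (simp add: locally_finite_setD)
  show "x < Min ?S"
    using S by simp
  have "z \<notin> A" if "x < z" "z < Min ?S" for z
    using Min_le[OF S, of z] Min_le[OF S, of "x + 1"] that by auto
  then show "A \<inter> {x<..<Min ?S} = {}"
    by auto
qed

text \<open>For \<open>C \<subseteq> A\<close> this says that the first point of \<open>A\<close> in \<open>[s, \<infinity>)\<close> lies in \<open>C\<close>
  (\<open>first_point_in_iff\<close>); quantifying over rational windows keeps it measurable.\<close>

definition first_point_in :: "real set \<Rightarrow> real set \<Rightarrow> real \<Rightarrow> bool" where
  "first_point_in C A s \<longleftrightarrow> (\<exists>q\<in>\<rat>. 0 < q \<and> 1 \<le> card (A \<inter> {s..<s + q})
      \<and> card (C \<inter> {s..<s + q}) = card (A \<inter> {s..<s + q}))"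

lemma first_point_in_iff:
  assumes A: "locally_finite_set A" and "C \<subseteq> A" and s: "s \<in> \<rat>"
    and x: "x \<in> A" "s \<le> x" "A \<inter> {s..<x} = {}"
  shows "first_point_in C A s \<longleftrightarrow> x \<in> C"
proof
  assume "first_point_in C A s"
  then obtain q where q: "1 \<le> card (A \<inter> {s..<s + q})" "card (C \<inter> {s..<s + q}) = card (A \<inter> {s..<s + q})"
    unfolding first_point_in_def by blast
  have fin: "finite (A \<inter> {s..<s + q})"
    using A by (simp add: locally_finite_setD)
  then have "C \<inter> {s..<s + q} = A \<inter> {s..<s + q}"
    using \<open>C \<subseteq> A\<close> q(2) by (intro card_subset_eq) auto
  moreover obtain y where "y \<in> A \<inter> {s..<s + q}"
    using q(1) by (metis card.empty ex_in_conv not_one_le_zero)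
  moreover have "x \<le> y"
    using x(3) calculation(2) by (meson Int_iff atLeastLessThan_iff disjoint_iff linorder_not_le)
  ultimately show "x \<in> C"
    using x by auto
next
  assume "x \<in> C"
  obtain r where r: "x < r" "A \<inter> {x<..<r} = {}"
    using locally_finite_gap_right[OF A] by blast
  obtain q' where q': "q' \<in> \<rat>" "x < q'" "q' < r"
    using Rats_dense_in_real[OF r(1)] by blast
  have "z \<notin> A" if "s \<le> z" "z < q'" "z \<noteq> x" for z
    using x(3) r(2) q'(3) that by (cases "z < x") auto
  then have window: "A \<inter> {s..<q'} = {x}"
    using x q'(2) by auto
  then have "C \<inter> {s..<q'} = {x}"
    using \<open>C \<subseteq> A\<close> \<open>x \<in> C\<close> by blast
  with window show "first_point_in C A s"
    unfolding first_point_in_def using q' x(2) s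
    by (intro bexI[of _ "q' - s"]) (auto simp: Rats_diff)
qed

lemma first_point_in_parity:
  assumes C: "proper_2colouring A C" and A: "locally_finite_set A"
    and t: "t \<in> \<rat>" "0 \<le> t" and y: "y \<in> A" "t \<le> y"
  shows "(first_point_in (fst C) A 0 \<longleftrightarrow> first_point_in (fst C) A t) \<longleftrightarrow> even (card (A \<inter> {0..<t}))"
proof -
  have CA: "fst C \<subseteq> A"
    using C unfolding proper_2colouring_def by auto
  obtain x0 where x0: "x0 \<in> A" "0 \<le> x0" "A \<inter> {0..<x0} = {}"
    using first_point_from[OF A y(1), of 0] t(2) y(2) by auto
  obtain xt where xt: "xt \<in> A" "t \<le> xt" "A \<inter> {t..<xt} = {}"
    using first_point_from[OF A y] by auto
  have "x0 \<le> xt"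
    using x0(3) xt(1,2) t(2) by (auto simp: not_le)
  have "A \<inter> {x0..<xt} = A \<inter> {0..<t}"
    using x0 xt by (auto simp: not_le)
  then show ?thesis
    using proper_2colouring_parity[OF C A x0(1) xt(1) \<open>x0 \<le> xt\<close>]
      first_point_in_iff[OF A CA _ x0] first_point_in_iff[OF A CA t(1) xt]
    by simp
qed

lemma first_point_in_translate:
  "first_point_in (translate (- t) C) (translate (- t) A) 0 \<longleftrightarrow> first_point_in C A t"
  unfolding first_point_in_def by (simp add: card_translate_Int translate_Ico add.commute)

lemma measurable_first_point_in:
  assumes f: "f \<in> lf_space \<rightarrow>\<^sub>M lf_space"
  shows "{A \<in> lf_sets. first_point_in (f A) A s} \<in> sets lf_space"
proof -
  have to_borel: "g \<in> lf_space \<rightarrow>\<^sub>M count_space UNIV \<Longrightarrow> g \<in> lf_space \<rightarrow>\<^sub>M (borel :: nat measure)" for g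
    by (erule measurable_compose) simp
  have [measurable]: "(\<lambda>A. card (A \<inter> {s..<s + q})) \<in> borel_measurable lf_space"
    "(\<lambda>A. card (f A \<inter> {s..<s + q})) \<in> borel_measurable lf_space" for q
    using measurable_compose[OF f measurable_card_Int] measurable_card_Int
    by (auto intro!: to_borel)
  have "{A \<in> space lf_space. first_point_in (f A) A s} \<in> sets lf_space"
    unfolding first_point_in_def
    by (rule sets.sets_Collect_countable_Ex'[OF _ countable_rat]) measurable
  then show ?thesis
    by simp
qed

section \<open>Parity events\<close>

definition parity_event :: "real set set \<Rightarrow> real \<Rightarrow> real set set" where
  "parity_event G t = {A \<in> lf_sets. (A \<in> G \<longleftrightarrow> translate (- t) A \<in> G) \<longleftrightarrow> odd (card (A \<inter> {0..<t}))}"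

context unit_poisson_process
begin

lemma measure_parity_event_le:
  assumes S: "S \<in> sets lf_space" and G: "G \<in> sets lf_space"
    and parity: "AE A in P. (A \<in> S \<longleftrightarrow> translate (- t) A \<in> S) \<longleftrightarrow> even (card (A \<inter> {0..<t}))"
  shows "measure P (parity_event G t) \<le> 2 * measure P (sym_diff S G)"
proof -
  let ?E = "sym_diff S G"
  let ?E' = "translate (- t) -` ?E \<inter> lf_sets"
  have E: "?E \<in> sets lf_space"
    using S G by auto
  have E': "?E' \<in> sets P"
    using measurable_sets[OF measurable_translate E] by (simp add: sets_P)
  have "AE A in P. A \<in> parity_event G t \<longrightarrow> A \<in> ?E \<union> ?E'"
    using parity AE_space by eventually_elim (auto simp: parity_event_def space_P)
  then have "measure P (parity_event G t) \<le> measure P (?E \<union> ?E')"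
    by (rule finite_measure_mono_AE) (use E E' in \<open>auto simp: sets_P\<close>)
  also have "\<dots> \<le> measure P ?E + measure P ?E'"
    by (rule measure_Un_le) (use E E' in \<open>auto simp: sets_P\<close>)
  also have "measure P ?E' = measure P ?E"
    by (rule measure_translate_vimage[OF E])
  finally show ?thesis
    by simp
qed

lemma measure_parity_unit_interval_ge:
  assumes Ls: "bounded_borel_list Ls"
    and Z: "Z \<in> sets borel" "bounded Z" "measure lborel Z = 1" "\<And>L. L \<in> set Ls \<Longrightarrow> disjnt Z L"
  shows "exp (-1) \<le> measure P {A \<in> lf_sets. Q (count_vector Ls A) \<longleftrightarrow> odd (card (A \<inter> Z))}"
proof -
  let ?Ds = "Z # atoms Ls"
  define K where "K = {v. v \<noteq> [] \<and> (Q (counts_of_atoms (length Ls) (tl v)) \<longleftrightarrow> odd (hd v))}"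
  have Ds: "bounded_borel_list ?Ds"
    using Z bounded_borel_list_atoms[OF Ls] by simp
  have "disjnt Z D" if "D \<in> set (atoms Ls)" for D
    using atoms_subset[OF that] Z(4) disjnt_subset2 by blast
  then have disjoint: "sorted_wrt disjnt ?Ds"
    by (simp add: sorted_wrt_disjnt_atoms)
  have "{A \<in> lf_sets. Q (count_vector Ls A) \<longleftrightarrow> odd (card (A \<inter> Z))} = count_vector ?Ds -` K \<inter> space P"
    using locally_finite_set_Int_bounded_borel_list[OF _ Ls]
    by (auto simp: K_def space_P count_vector_atoms)
  then have "measure P {A \<in> lf_sets. Q (count_vector Ls A) \<longleftrightarrow> odd (card (A \<inter> Z))}
      = measure (distr P (count_space UNIV) (count_vector ?Ds)) K"
    by (simp add: measure_distr[OF measurable_count_vector_P[OF Ds]])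
  also have "\<dots> = measure (poisson_counts_pmf (1 # map (measure lborel) (atoms Ls))) K"
    using Z(3) by (simp add: distr_count_vector[OF disjoint Ds])
  moreover have "exp (-1) \<le> measure (poisson_counts_pmf (1 # map (measure lborel) (atoms Ls))) K"
    by (rule measure_poisson_counts_pmf_ge) (auto simp: K_def)
  ultimately show ?thesis
    by linarith
qed

lemma measure_parity_event_cylinder_ge:
  assumes Bs: "bounded_borel_list Bs" and support: "\<And>B. B \<in> set Bs \<Longrightarrow> B \<subseteq> {- real M..<real M}"
  shows "exp (-1) \<le> measure P (parity_event {A \<in> lf_sets. count_vector Bs A \<in> K} (real (2 * M + 1)))"
proof -
  define t where "t = real (2 * M + 1)"
  define n where "n = length Bs"
  define Z where "Z = {real M..<real M + 1}"
  \<comment> \<open>\<open>[0, t)\<close> splits into \<open>[0, M)\<close>, \<open>Z\<close> and \<open>[M + 1, t)\<close>; \<open>Ls\<close> lists every set counted except \<open>Z\<close>.\<close>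
  define Ls where "Ls = Bs @ map (translate t) Bs @ [{0..<real M}, {real M + 1..<t}]"
  define Q where "Q v \<longleftrightarrow> ((take n v \<in> K \<longleftrightarrow> take n (drop n v) \<in> K) \<longleftrightarrow> even (v ! (2 * n) + v ! (2 * n + 1)))"
    for v
  have Ls: "bounded_borel_list Ls"
    using Bs bounded_borel_list_translate[OF Bs] by (simp add: Ls_def)
  have translated: "translate t B \<subseteq> {real M + 1..}" if "B \<in> set Bs" for B
    using support[OF that] unfolding translate_def t_def by auto
  have "L \<subseteq> {..<real M} \<union> {real M + 1..}" if "L \<in> set Ls" for L
    using that unfolding Ls_def by (auto dest: support[THEN subsetD] translated[THEN subsetD])
  then have disjoint: "disjnt Z L" if "L \<in> set Ls" for L
    using that unfolding Z_def disjnt_def by force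
  have "A \<in> parity_event {A \<in> lf_sets. count_vector Bs A \<in> K} t
      \<longleftrightarrow> A \<in> {A \<in> lf_sets. Q (count_vector Ls A) \<longleftrightarrow> odd (card (A \<inter> Z))}" for A
  proof (cases "locally_finite_set A")
    case True
    have "card (A \<inter> {0..<t}) = card (A \<inter> {0..<real M}) + card (A \<inter> Z) + card (A \<inter> {real M + 1..<t})"
      using card_Int_Ico_split[OF True, of 0 "real M" t] card_Int_Ico_split[OF True, of "real M" "real M + 1" t]
      by (simp add: Z_def t_def)
    then show ?thesis
      using True locally_finite_set_translate[OF True]
      by (simp add: parity_event_def Q_def Ls_def n_def count_vector_translate nth_append) blast
  qed (simp add: parity_event_def)
  then have "parity_event {A \<in> lf_sets. count_vector Bs A \<in> K} t
      = {A \<in> lf_sets. Q (count_vector Ls A) \<longleftrightarrow> odd (card (A \<inter> Z))}"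
    by blast
  moreover have "exp (-1) \<le> measure P {A \<in> lf_sets. Q (count_vector Ls A) \<longleftrightarrow> odd (card (A \<inter> Z))}"
    by (rule measure_parity_unit_interval_ge[OF Ls _ _ _ disjoint]) (auto simp: Z_def)
  ultimately show ?thesis
    unfolding t_def by simp
qed

lemma AE_first_point_in_parity:
  assumes colouring: "AE A in P. proper_2colouring A (F A)"
    and equivariant: "\<forall>s. \<forall>A \<in> space lf_space.
        F (translate s A) = (translate s (fst (F A)), translate s (snd (F A)))"
    and t: "t \<in> \<rat>" "0 \<le> t"
  shows "AE A in P. (first_point_in (fst (F A)) A 0
      \<longleftrightarrow> first_point_in (fst (F (translate (- t) A))) (translate (- t) A) 0)
      \<longleftrightarrow> even (card (A \<inter> {0..<t}))"
  using colouring AE_point_from[of t] AE_space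
proof eventually_elim
  case (elim A)
  then obtain y where "y \<in> A" "t \<le> y"
    by blast
  then show ?case
    using first_point_in_parity[OF elim(1) _ t] elim(3)
    by (simp add: space_P equivariant first_point_in_translate)
qed

end

lemma exp_minus_one_gt_quarter: "1 / 4 < exp (-1 :: real)"
proof -
  have "exp 1 < (4 :: real)"
    using exp_le by linarith
  then show ?thesis
    by (simp add: exp_minus field_simps)
qed

theorem lemma6:
  assumes "poisson_process P"
  shows "\<not> (\<exists>F. F \<in> lf_space \<rightarrow>\<^sub>M (lf_space \<Otimes>\<^sub>M lf_space) \<and>
              (AE A in P. proper_2colouring A (F A)) \<and>
              (\<forall>t. \<forall>A \<in> space lf_space.
                 F (translate t A) = (translate t (fst (F A)), translate t (snd (F A)))))"
proof (intro notI, elim exE conjE)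
  interpret unit_poisson_process P
    by (rule unit_poisson_process.intro) fact
  fix F
  assume F: "F \<in> lf_space \<rightarrow>\<^sub>M (lf_space \<Otimes>\<^sub>M lf_space)"
    and colouring: "AE A in P. proper_2colouring A (F A)"
    and equivariant: "\<forall>t. \<forall>A \<in> space lf_space.
        F (translate t A) = (translate t (fst (F A)), translate t (snd (F A)))"
  define S where "S = {A \<in> lf_sets. first_point_in (fst (F A)) A 0}"
  have S: "S \<in> sets lf_space"
    unfolding S_def using measurable_first_point_in[OF measurable_compose[OF F measurable_fst]]
    by (simp add: comp_def)
  obtain Bs K M where Bs: "bounded_borel_list Bs" "\<And>B. B \<in> set Bs \<Longrightarrow> B \<subseteq> {- real M..<real M}"
    and approx: "measure P (sym_diff S {A \<in> lf_sets. count_vector Bs A \<in> K}) < 1 / 8"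
    by (rule cylinder_approximation[OF S, of "1 / 8"]) auto
  define t where "t = real (2 * M + 1)"
  have t: "t \<in> \<rat>" "0 \<le> t"
    unfolding t_def by (simp_all only: Rats_of_nat of_nat_0_le_iff)
  have parity: "AE A in P. (A \<in> S \<longleftrightarrow> translate (- t) A \<in> S) \<longleftrightarrow> even (card (A \<inter> {0..<t}))"
    using AE_first_point_in_parity[OF colouring equivariant t] AE_space
    by eventually_elim (simp add: S_def space_P locally_finite_set_translate)
  have "measure P (parity_event {A \<in> lf_sets. count_vector Bs A \<in> K} t)
      \<le> 2 * measure P (sym_diff S {A \<in> lf_sets. count_vector Bs A \<in> K})"
    using S cylinder_in_sets[OF Bs(1)] parity by (rule measure_parity_event_le)
  moreover have "exp (-1) \<le> measure P (parity_event {A \<in> lf_sets. count_vector Bs A \<in> K} t)"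
    unfolding t_def using Bs by (rule measure_parity_event_cylinder_ge)
  ultimately show False
    using approx exp_minus_one_gt_quarter by linarith
qed

end
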